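(* Fix $\beta\in(1,2)$ and let $Y=(Y_s)_{s\in\mathbb Z_{\ge0}}$ be the discrete-time random walk on the weighted graph described in the context, run in stationarity, and let $\mathcal C=\mathbb N^+=\{1,2,3,\dots\}$. Then $\mathbf P[Y_0\in\mathcal C]=1/2$ and, as $t\to\infty$, $$\mathbf P\big[Y_s\in\mathcal C\ \ \forall s\in\{0,1,\dots,t\}\big]=t^{\frac{1-\beta}{2}+o(1)}.$$
   Context: The graph has vertex set $\mathbb Z^*=\mathbb Z\setminus\{0\}$ and edges: nearest-neighbour edges $\{n,n+1\}$ and $\{-(n+1),-n\}$ for $n\ge1$, the edge $\{-1,1\}$, and a self-loop at every vertex. Conductances: $c_{n,n+1}=c_{-(n+1),-n}=n^{-\beta}$ for $n\ge1$; $c_{-1,1}=c_{1,1}=c_{-1,-1}=1/2$; and for $|n|\ge2$ the self-loop conductance is $c_{n,n}=c_{n,n-1}+c_{n,n+1}$ (conductance of the two edges at $n$). The walk moves from $x$ to $y$ with probability $c_{x,y}/\pi(x)$, where $\pi(x)=\sum_y c_{x,y}$ (self-loop counted once); $\pi$ has finite total mass and the walk is run started from the normalized $\pi$. $\mathbf P$ is the law of this stationary walk. *)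

theory Defs
  imports "HOL-Probability.Probability"
begin

text \<open>Vertices of the graph are the nonzero integers; the integer 0 is not a vertex
(all conductances at 0 vanish, so 0 carries no mass).\<close>

definition edge_cond :: "real \<Rightarrow> int \<Rightarrow> int \<Rightarrow> real" where
  "edge_cond \<beta> x y =
     (if 0 < x \<and> 0 < y \<and> \<bar>x - y\<bar> = 1 then real_of_int (min x y) powr (- \<beta>)
      else if x < 0 \<and> y < 0 \<and> \<bar>x - y\<bar> = 1 then real_of_int (min \<bar>x\<bar> \<bar>y\<bar>) powr (- \<beta>)
      else if (x = -1 \<and> y = 1) \<or> (x = 1 \<and> y = -1) then 1/2
      else 0)"

definition cond :: "real \<Rightarrow> int \<Rightarrow> int \<Rightarrow> real" where
  "cond \<beta> x y =
     (if x = y then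
        (if \<bar>x\<bar> \<ge> 2 then edge_cond \<beta> x (x - 1) + edge_cond \<beta> x (x + 1)
         else if \<bar>x\<bar> = 1 then 1/2 else 0)
      else edge_cond \<beta> x y)"

definition pi_w :: "real \<Rightarrow> int \<Rightarrow> real" where
  "pi_w \<beta> x = infsum (\<lambda>y. cond \<beta> x y) UNIV"

definition pi_total :: "real \<Rightarrow> real" where
  "pi_total \<beta> = infsum (pi_w \<beta>) UNIV"

definition init_pmf :: "real \<Rightarrow> int pmf" where
  "init_pmf \<beta> = embed_pmf (\<lambda>x. pi_w \<beta> x / pi_total \<beta>)"

text \<open>Transition kernel \<open>P(x,y) = c_{x,y}/\<pi>(x)\<close>; the value at the non-vertex 0 is irrelevant.\<close>
definition step_pmf :: "real \<Rightarrow> int \<Rightarrow> int pmf" where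
  "step_pmf \<beta> x = (if x = 0 then return_pmf 0
                    else embed_pmf (\<lambda>y. cond \<beta> x y / pi_w \<beta> x))"

fun path_pmf :: "real \<Rightarrow> nat \<Rightarrow> int list pmf" where
  "path_pmf \<beta> 0 = map_pmf (\<lambda>x. [x]) (init_pmf \<beta>)"
| "path_pmf \<beta> (Suc t) =
     bind_pmf (path_pmf \<beta> t) (\<lambda>xs. map_pmf (\<lambda>y. xs @ [y]) (step_pmf \<beta> (last xs)))"

definition stay_pos :: "real \<Rightarrow> nat \<Rightarrow> real" where
  "stay_pos \<beta> t = measure_pmf.prob (path_pmf \<beta> t) {xs. \<forall>x\<in>set xs. 0 < x}"

end

theory Submission
  imports Defs
begin

(*
  Write bond(n) = n^(-beta) for the conductance of {n, n+1}.  Then pi(n) = 2 (bond(n-1) + bond(n))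
  for n >= 2, so pi(n) is comparable to n^(-beta): pi is summable, symmetric under n |-> -n (which
  gives P[Y_0 > 0] = 1/2), and the stationary mass of [m, oo) is of order m^(1-beta).  On the
  positive half-line the walk is a lazy birth-death chain with drift O(1/n) towards the origin,
  so up to time t it behaves diffusively on the scale sqrt t.  Both bounds are Lyapunov-function
  arguments for the path law killed on leaving a region K, proved once for arbitrary K:
  - upper bound (lyapunov_upper): the quadratic function quad_lyap drops by 1 per step on
    K = (0, oo), so (t+1) P[survive, Y_0 < m] <= E[quad_lyap(Y_0); 0 < Y_0 < m] = O(m^(3-beta));
    together with P[Y_0 >= m] = O(m^(1-beta)) and m = ceil(sqrt t) this gives O(t^((1-beta)/2));
  - lower bound (lyapunov_lower): gap_sq j y = (2j - y)_+^2 grows by at most 5 per step on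
    K = (j, oo) and leaving K costs j^2, so from [2j, 4j] the walk stays above j up to time t
    with probability >= 1 - 5t/j^2; the block [2j, 4j] has mass of order j^(1-beta), and
    j = ceil(sqrt (10 t)).
  The file proceeds: real inequalities, the conductances and pi, the stationary law, killed
  path expectations with the two Lyapunov lemmas, the two concrete Lyapunov functions, the
  quantitative bounds, and finally the main theorem.
*)

(* Convexity of y powr (1-beta): its decrement over [x-1,x] dominates (beta-1) x powr (-beta).
   Summed over x, this bounds the tails of the stationary mass. *)
lemma powr_decrement_lower:
  fixes x \<beta> :: real
  assumes x: "1 < x" and \<beta>: "1 < \<beta>"
  shows "(\<beta> - 1) * x powr (-\<beta>) \<le> (x - 1) powr (1 - \<beta>) - x powr (1 - \<beta>)"
proof -
  define s where "s = \<beta> - 1"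
  define u where "u = x / (x - 1)"
  have s_pos: "s > 0" using \<beta> by (simp add: s_def)
  have u_gt_1: "u > 1" using x by (simp add: u_def field_simps)
  have x_minus_1: "x - 1 = x / u" using x by (simp add: u_def field_simps)
  have "u powr (1 - \<beta>) * u powr (\<beta> - 1) = 1" using u_gt_1 by (simp add: powr_add[symmetric])
  then have "(x - 1) powr (1 - \<beta>) = x powr (-s) * u powr s"
    using x u_gt_1 unfolding x_minus_1 by (simp add: s_def powr_divide powr_minus field_simps)
  then have decrement: "(x - 1) powr (1 - \<beta>) - x powr (1 - \<beta>) = x powr (-s) * (u powr s - 1)"
    by (simp add: s_def algebra_simps)
  have "ln (1 / u) \<le> 1 / u - 1" using u_gt_1 by (intro ln_le_minus_one) simp
  then have "1 / x \<le> ln u" using x u_gt_1 by (simp add: ln_div u_def field_simps)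
  moreover have "1 + s * ln u \<le> u powr s"
    using u_gt_1 exp_ge_add_one_self[of "s * ln u"] by (simp add: powr_def)
  ultimately have "s * (1 / x) \<le> u powr s - 1"
    using mult_left_mono[of "1 / x" "ln u" s] s_pos by simp
  then have "x powr (-s) * (s * (1 / x)) \<le> x powr (-s) * (u powr s - 1)"
    by (intro mult_left_mono) simp_all
  moreover have "x powr (-s) * (s * (1 / x)) = s * x powr (-\<beta>)"
    using x by (simp add: s_def powr_diff powr_minus field_simps)
  ultimately show ?thesis by (simp add: decrement s_def)
qed

(* Comparison of consecutive weights: (x-1) powr (-beta) exceeds x powr (-beta) only by a relative
   error O(1/x); this controls the (small) drift of the walk towards the origin. *)
lemma powr_shift_upper:
  fixes x \<beta> :: real
  assumes x: "2 \<le> x" and \<beta>: "\<beta> \<le> 2"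
  shows "(x - 1) powr (-\<beta>) \<le> x powr (-\<beta>) * (1 + 3 / (x - 1))"
proof -
  define u where "u = x / (x - 1)"
  have u_gt_1: "u > 1" using x by (simp add: u_def field_simps)
  have shift: "(x - 1) powr (-\<beta>) = x powr (-\<beta>) * u powr \<beta>"
    using x u_gt_1 by (simp add: u_def powr_divide powr_minus field_simps)
  have "u powr \<beta> \<le> u powr 2" using u_gt_1 \<beta> by (intro powr_mono) auto
  also have "\<dots> = x\<^sup>2 / (x - 1)\<^sup>2" using u_gt_1 by (simp add: u_def powr_numeral power_divide)
  also have "\<dots> \<le> 1 + 3 / (x - 1)"
  proof -
    have "(1 + 3 / (x - 1)) * (x - 1)\<^sup>2 = (x - 1)\<^sup>2 + 3 * (x - 1)"
      using x by (simp add: power2_eq_square field_simps)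
    moreover have "x\<^sup>2 \<le> (x - 1)\<^sup>2 + 3 * (x - 1)" using x by (simp add: power2_eq_square algebra_simps)
    ultimately show ?thesis using x by (subst divide_le_eq) auto
  qed
  finally show ?thesis unfolding shift using x by (intro mult_left_mono) auto
qed

lemma sum_telescope_int:
  fixes g :: "int \<Rightarrow> real"
  assumes "m - 1 \<le> N"
  shows "(\<Sum>x\<in>{m..N}. g (x - 1) - g x) = g (m - 1) - g N"
  using assms
proof (induction N rule: int_ge_induct)
  case (step i)
  have "{m..i + 1} = insert (i + 1) {m..i}" using step.hyps by auto
  then show ?case using step by simp
qed simp

(* Conductance of the edge {n, n+1} (and of {-(n+1), -n}) for n \<ge> 1. *)
definition bond :: "real \<Rightarrow> int \<Rightarrow> real" where
  "bond \<beta> n = real_of_int n powr (-\<beta>)"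

lemma bond_pos: "1 \<le> n \<Longrightarrow> 0 < bond \<beta> n"
  by (simp add: bond_def)

lemma bond_antimono: "0 \<le> \<beta> \<Longrightarrow> 1 \<le> x \<Longrightarrow> x \<le> y \<Longrightarrow> bond \<beta> y \<le> bond \<beta> x"
  unfolding bond_def by (intro powr_mono2') auto

lemma bond_prev_le: "\<beta> \<le> 2 \<Longrightarrow> 2 \<le> x \<Longrightarrow> bond \<beta> (x - 1) \<le> bond \<beta> x * (1 + 3 / (x - 1))"
  using powr_shift_upper[of "real_of_int x" \<beta>] by (simp add: bond_def)

lemma bond_prev_le4:
  assumes "\<beta> \<le> 2" "2 \<le> x"
  shows "bond \<beta> (x - 1) \<le> 4 * bond \<beta> x"
proof -
  have "3 / real_of_int (x - 1) \<le> 3" using assms by (simp add: field_simps)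
  then have "bond \<beta> x * (1 + 3 / (x - 1)) \<le> bond \<beta> x * 4"
    using bond_pos[of x \<beta>] assms by (intro mult_left_mono) auto
  then show ?thesis using bond_prev_le[OF assms] by simp
qed

lemma edge_cond_neg: "edge_cond \<beta> (-x) (-y) = edge_cond \<beta> x y"
  unfolding edge_cond_def by (auto simp: abs_if min_def)

lemma cond_neg: "cond \<beta> (-x) (-y) = cond \<beta> x y"
proof -
  have neighbours: "- x - 1 = -(x + 1)" "- x + 1 = -(x - 1)" by simp_all
  show ?thesis unfolding cond_def neighbours edge_cond_neg by (auto simp: add.commute)
qed

lemma cond_nonneg: "0 \<le> cond \<beta> x y"
  unfolding cond_def edge_cond_def by auto

lemma cond_support: "cond \<beta> x y \<noteq> 0 \<Longrightarrow> y \<in> {x - 1, x, x + 1, -x}"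
  unfolding cond_def edge_cond_def by (auto split: if_splits)

lemma cond_ge2:
  assumes "2 \<le> x"
  shows "cond \<beta> x y = (if y = x - 1 then bond \<beta> (x - 1)
                        else if y = x then bond \<beta> (x - 1) + bond \<beta> x
                        else if y = x + 1 then bond \<beta> x else 0)"
  using assms unfolding cond_def edge_cond_def bond_def by (auto simp: min_def)

lemma cond_1: "cond \<beta> 1 y = (if y = 1 then 1/2 else if y = 2 then 1 else if y = -1 then 1/2 else 0)"
  unfolding cond_def edge_cond_def by (auto simp: min_def)

lemma pi_w_eq_sum: "pi_w \<beta> x = sum (cond \<beta> x) {x - 1, x, x + 1, -x}"
  unfolding pi_w_def by (subst infsum_cong_neutral[of "{x - 1, x, x + 1, -x}" UNIV _ "cond \<beta> x"])
    (auto dest: cond_support)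

lemma pi_w_neg: "pi_w \<beta> (-x) = pi_w \<beta> x"
proof -
  have "pi_w \<beta> (-x) = infsum (cond \<beta> (-x)) (uminus ` UNIV)"
    unfolding pi_w_def by (metis surj_def minus_minus)
  also have "\<dots> = infsum (cond \<beta> (-x) \<circ> uminus) UNIV"
    by (rule infsum_reindex) simp
  also have "\<dots> = pi_w \<beta> x" by (simp add: pi_w_def o_def cond_neg)
  finally show ?thesis .
qed

lemma pi_w_ge2: "2 \<le> x \<Longrightarrow> pi_w \<beta> x = 2 * (bond \<beta> (x - 1) + bond \<beta> x)"
  by (simp add: pi_w_eq_sum cond_ge2)

lemma pi_w_1: "pi_w \<beta> 1 = 2"
  by (simp add: pi_w_eq_sum cond_1)

lemma pi_w_0: "pi_w \<beta> 0 = 0"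
proof -
  have "cond \<beta> 0 y = 0" for y unfolding cond_def edge_cond_def by auto
  then show ?thesis by (simp add: pi_w_eq_sum)
qed

lemma pi_w_nonneg: "0 \<le> pi_w \<beta> x"
  unfolding pi_w_eq_sum by (rule sum_nonneg) (simp add: cond_nonneg)

lemma pi_w_pos:
  assumes "x \<noteq> 0"
  shows "0 < pi_w \<beta> x"
proof -
  have pos: "0 < pi_w \<beta> y" if "1 \<le> y" for y
    using that by (cases "y = 1") (auto simp: pi_w_1 pi_w_ge2 bond_pos add_pos_pos)
  show ?thesis
    using assms pos[of x] pos[of "-x"] by (cases "0 < x") (auto simp: pi_w_neg)
qed

lemma step_pmf_integral:
  assumes x: "x \<noteq> 0" and g: "\<And>y. 0 \<le> g y"
  shows "(\<integral>\<^sup>+y. ennreal (g y) \<partial>step_pmf \<beta> x)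
    = ennreal (\<Sum>y\<in>{x - 1, x, x + 1, -x}. g y * cond \<beta> x y / pi_w \<beta> x)"
proof -
  let ?S = "{x - 1, x, x + 1, -x}"
  have density: "(\<integral>\<^sup>+y. ennreal (cond \<beta> x y / pi_w \<beta> x) \<partial>count_space UNIV) = 1"
  proof -
    have "(\<integral>\<^sup>+y. ennreal (cond \<beta> x y / pi_w \<beta> x) \<partial>count_space UNIV)
        = (\<Sum>y\<in>?S. ennreal (cond \<beta> x y / pi_w \<beta> x))"
      by (rule nn_integral_count_space') (use cond_support[of \<beta> x] in force)+
    also have "\<dots> = ennreal (\<Sum>y\<in>?S. cond \<beta> x y / pi_w \<beta> x)"
      by (rule sum_ennreal) (simp add: cond_nonneg pi_w_nonneg)
    also have "(\<Sum>y\<in>?S. cond \<beta> x y / pi_w \<beta> x) = 1"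
      using pi_w_pos[OF x, of \<beta>] by (simp add: sum_divide_distrib[symmetric] pi_w_eq_sum[symmetric])
    finally show ?thesis by simp
  qed
  have pmf_step: "pmf (step_pmf \<beta> x) y = cond \<beta> x y / pi_w \<beta> x" for y
    using x by (simp add: step_pmf_def pmf_embed_pmf[OF _ density] cond_nonneg pi_w_nonneg)
  have "(\<integral>\<^sup>+y. ennreal (g y) \<partial>step_pmf \<beta> x) = (\<Sum>y\<in>?S. ennreal (g y) * pmf (step_pmf \<beta> x) y)"
    by (rule nn_integral_measure_pmf_support)
      (auto simp: set_pmf_iff pmf_step dest: cond_support)
  also have "\<dots> = (\<Sum>y\<in>?S. ennreal (g y * cond \<beta> x y / pi_w \<beta> x))"
    by (intro sum.cong refl) (simp add: pmf_step g ennreal_mult[symmetric] cond_nonneg pi_w_nonneg)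
  also have "\<dots> = ennreal (\<Sum>y\<in>?S. g y * cond \<beta> x y / pi_w \<beta> x)"
    by (rule sum_ennreal) (simp add: g cond_nonneg pi_w_nonneg)
  finally show ?thesis .
qed

lemma step_pmf_integral_ge2:
  assumes x: "2 \<le> x" and g: "\<And>y. 0 \<le> g y"
  shows "(\<integral>\<^sup>+y. ennreal (g y) \<partial>step_pmf \<beta> x) = ennreal
    ((bond \<beta> (x - 1) * g (x - 1) + (bond \<beta> (x - 1) + bond \<beta> x) * g x + bond \<beta> x * g (x + 1))
      / (2 * (bond \<beta> (x - 1) + bond \<beta> x)))"
  using x by (simp add: step_pmf_integral[OF _ g] cond_ge2 pi_w_ge2 add_divide_distrib mult_ac add_ac)

lemma step_pmf_integral_1:
  assumes g: "\<And>y. 0 \<le> g y"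
  shows "(\<integral>\<^sup>+y. ennreal (g y) \<partial>step_pmf \<beta> 1) = ennreal ((g 1 / 2 + g 2 + g (-1) / 2) / 2)"
  by (simp add: step_pmf_integral[OF _ g] cond_1 pi_w_1 add_divide_distrib add.assoc)

lemma set_step_pmf_ge2:
  assumes "2 \<le> x" "y \<in> set_pmf (step_pmf \<beta> x)"
  shows "x - 1 \<le> y"
proof -
  have "(\<integral>\<^sup>+z. ennreal (if z < x - 1 then 1 else 0) \<partial>step_pmf \<beta> x) = 0"
    using assms(1) by (simp add: step_pmf_integral_ge2)
  then show ?thesis
    using assms(2) by (subst (asm) nn_integral_0_iff_AE) (auto simp: AE_measure_pmf_iff split: if_splits)
qed

context
  fixes \<beta> :: real
  assumes \<beta>_gt_1: "1 < \<beta>" and \<beta>_lt_2: "\<beta> < 2"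
begin

lemma pi_w_le_bond: "1 \<le> x \<Longrightarrow> pi_w \<beta> x \<le> 10 * bond \<beta> x"
  using bond_prev_le4[of \<beta> x] bond_pos[of x \<beta>] \<beta>_lt_2
  by (cases "x = 1") (auto simp: pi_w_1 pi_w_ge2 bond_def)

lemma pi_w_le_decrement:
  assumes "2 \<le> x"
  shows "pi_w \<beta> x \<le> 10 / (\<beta> - 1) * (real_of_int (x - 1) powr (1 - \<beta>) - real_of_int x powr (1 - \<beta>))"
proof -
  let ?D = "real_of_int (x - 1) powr (1 - \<beta>) - real_of_int x powr (1 - \<beta>)"
  have "(\<beta> - 1) * bond \<beta> x \<le> ?D"
    using powr_decrement_lower[of "real_of_int x" \<beta>] assms \<beta>_gt_1 by (simp add: bond_def)
  then have bond_le: "bond \<beta> x \<le> ?D / (\<beta> - 1)" using \<beta>_gt_1 by (simp add: field_simps)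
  have "pi_w \<beta> x \<le> 10 * bond \<beta> x" using pi_w_le_bond[of x] assms by simp
  also have "\<dots> \<le> 10 * (?D / (\<beta> - 1))" using bond_le by (rule mult_left_mono) simp
  also have "\<dots> = 10 / (\<beta> - 1) * ?D" by simp
  finally show ?thesis .
qed

lemma pi_w_sum_tail:
  assumes m: "2 \<le> m" and F: "finite F" "F \<subseteq> {m..}"
  shows "sum (pi_w \<beta>) F \<le> 10 / (\<beta> - 1) * real_of_int (m - 1) powr (1 - \<beta>)"
proof (cases "F = {}")
  case True then show ?thesis using \<beta>_gt_1 by simp
next
  case False
  define N where "N = Max F"
  define g where "g x = real_of_int x powr (1 - \<beta>)" for x
  have "N \<in> F" using F False by (simp add: N_def)
  then have "F \<subseteq> {m..N}" "m \<le> N" using F by (auto simp: N_def)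
  then have "sum (pi_w \<beta>) F \<le> sum (pi_w \<beta>) {m..N}"
    by (intro sum_mono2) (auto simp: pi_w_nonneg)
  also have "\<dots> \<le> (\<Sum>x\<in>{m..N}. 10 / (\<beta> - 1) * (g (x - 1) - g x))"
    using m by (intro sum_mono) (unfold g_def, rule pi_w_le_decrement, simp)
  also have "\<dots> = 10 / (\<beta> - 1) * (g (m - 1) - g N)"
    using \<open>m \<le> N\<close> by (subst sum_distrib_left[symmetric], subst sum_telescope_int) auto
  also have "\<dots> \<le> 10 / (\<beta> - 1) * g (m - 1)"
    using \<beta>_gt_1 by (intro mult_left_mono) (auto simp: g_def)
  finally show ?thesis by (simp add: g_def)
qed

lemma pi_w_sum_positive:
  assumes F: "finite F" "F \<subseteq> {0<..}"
  shows "sum (pi_w \<beta>) F \<le> 2 + 10 / (\<beta> - 1)"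
proof -
  have split: "F = (F \<inter> {1}) \<union> (F \<inter> {2..})" using F by auto
  have "sum (pi_w \<beta>) F = sum (pi_w \<beta>) (F \<inter> {1}) + sum (pi_w \<beta>) (F \<inter> {2..})"
    using F by (subst split, intro sum.union_disjoint) auto
  also have "sum (pi_w \<beta>) (F \<inter> {1}) \<le> 2"
    by (cases "1 \<in> F") (auto simp: pi_w_1)
  also have "sum (pi_w \<beta>) (F \<inter> {2..}) \<le> 10 / (\<beta> - 1)"
    using pi_w_sum_tail[of 2 "F \<inter> {2..}"] F by simp
  finally show ?thesis by simp
qed

(* By the symmetry pi(-x) = pi(x), finite sums of pi are uniformly bounded, so pi is summable. *)
lemma pi_w_summable: "pi_w \<beta> summable_on A"
proof -
  have bounded: "sum (pi_w \<beta>) F \<le> 2 * (2 + 10 / (\<beta> - 1))" if F: "finite F" for F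
  proof -
    let ?P = "F \<inter> {0<..}" and ?N = "F \<inter> {..<0}"
    have "F = ?P \<union> ?N \<union> (F \<inter> {0})" by auto
    then have "sum (pi_w \<beta>) F = sum (pi_w \<beta>) (?P \<union> ?N \<union> (F \<inter> {0}))" by simp
    also have "\<dots> = sum (pi_w \<beta>) ?P + sum (pi_w \<beta>) ?N + sum (pi_w \<beta>) (F \<inter> {0})"
      using F by (subst sum.union_disjoint, auto)+
    also have "sum (pi_w \<beta>) (F \<inter> {0}) = 0" by (cases "0 \<in> F") (auto simp: pi_w_0)
    also have "sum (pi_w \<beta>) ?N = sum (pi_w \<beta>) (uminus ` ?N)"
      by (subst sum.reindex) (auto simp: pi_w_neg inj_on_def)
    also have "\<dots> \<le> 2 + 10 / (\<beta> - 1)" using F by (intro pi_w_sum_positive) auto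
    also have "sum (pi_w \<beta>) ?P \<le> 2 + 10 / (\<beta> - 1)" using F by (intro pi_w_sum_positive) auto
    finally show ?thesis by simp
  qed
  have "pi_w \<beta> summable_on UNIV"
    by (rule nonneg_bdd_above_summable_on) (auto simp: pi_w_nonneg bdd_above_def intro: bounded)
  then show ?thesis by (rule summable_on_subset_banach) simp
qed

lemma pi_total_pos: "0 < pi_total \<beta>"
proof -
  have "infsum (pi_w \<beta>) {1} \<le> infsum (pi_w \<beta>) UNIV"
    by (rule infsum_mono2) (auto simp: pi_w_summable pi_w_nonneg)
  then show ?thesis by (simp add: pi_total_def pi_w_1)
qed

lemma prob_init: "measure_pmf.prob (init_pmf \<beta>) S = infsum (pi_w \<beta>) S / pi_total \<beta>"
proof -
  let ?p = "\<lambda>x. pi_w \<beta> x / pi_total \<beta>"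
  have infsum_p: "infsum ?p S = infsum (pi_w \<beta>) S / pi_total \<beta>" for S
    using infsum_cmult_left[OF pi_w_summable, of "1 / pi_total \<beta>" S] by simp
  have "Infinite_Sum.abs_summable_on ?p S" for S
    using summable_on_cmult_left[OF pi_w_summable, of "1 / pi_total \<beta>" S] pi_total_pos
    by (simp add: pi_w_nonneg)
  then have abs_summable: "Infinite_Set_Sum.abs_summable_on ?p S" for S
    using abs_summable_equivalent by blast
  have "(\<integral>\<^sup>+x. ennreal (?p x) \<partial>count_space UNIV) = ennreal (infsetsum ?p UNIV)"
    by (rule nn_integral_conv_infsetsum[OF abs_summable]) (use pi_total_pos in \<open>simp add: pi_w_nonneg\<close>)
  also have "infsetsum ?p UNIV = infsum ?p UNIV" by (rule infsetsum_infsum[OF abs_summable])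
  also have "\<dots> = 1" unfolding infsum_p using pi_total_pos by (simp add: pi_total_def)
  finally have pmf_init: "pmf (init_pmf \<beta>) = ?p"
    unfolding init_pmf_def using pi_total_pos
    by (intro ext, subst pmf_embed_pmf) (auto simp: pi_w_nonneg)
  show ?thesis
    by (simp add: measure_pmf_conv_infsetsum pmf_init infsetsum_infsum[OF abs_summable] infsum_p)
qed

lemma pmf_init: "pmf (init_pmf \<beta>) x = pi_w \<beta> x / pi_total \<beta>"
  using prob_init[of "{x}"] by (simp add: measure_pmf_single)

lemma init_positive_half: "measure_pmf.prob (init_pmf \<beta>) {x. 0 < x} = 1/2"
proof -
  let ?P = "{x::int. 0 < x}" and ?N = "{x::int. x < 0}"
  have "?N = uminus ` ?P" by (auto simp: image_iff intro!: exI[of _ "-x" for x])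
  then have negative: "infsum (pi_w \<beta>) ?N = infsum (pi_w \<beta>) ?P"
    by (simp add: infsum_reindex inj_on_def o_def pi_w_neg)
  have "UNIV = ?P \<union> (?N \<union> {0})" by auto
  then have "pi_total \<beta> = infsum (pi_w \<beta>) (?P \<union> (?N \<union> {0}))" by (simp add: pi_total_def)
  also have "\<dots> = infsum (pi_w \<beta>) ?P + infsum (pi_w \<beta>) (?N \<union> {0})"
    by (rule infsum_Un_disjoint) (auto intro: pi_w_summable)
  also have "infsum (pi_w \<beta>) (?N \<union> {0}) = infsum (pi_w \<beta>) ?N + infsum (pi_w \<beta>) {0}"
    by (rule infsum_Un_disjoint) (auto intro: pi_w_summable)
  finally have "pi_total \<beta> = 2 * infsum (pi_w \<beta>) ?P" by (simp add: negative pi_w_0)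
  then show ?thesis using pi_total_pos by (simp add: prob_init)
qed

lemma init_tail_upper:
  assumes "2 \<le> m"
  shows "measure_pmf.prob (init_pmf \<beta>) {m..}
    \<le> 10 / (\<beta> - 1) * real_of_int (m - 1) powr (1 - \<beta>) / pi_total \<beta>"
proof -
  have "infsum (pi_w \<beta>) {m..} \<le> 10 / (\<beta> - 1) * real_of_int (m - 1) powr (1 - \<beta>)"
    by (rule infsum_le_finite_sums[OF pi_w_summable]) (use pi_w_sum_tail[OF assms] in auto)
  then show ?thesis unfolding prob_init by (rule divide_right_mono) (use pi_total_pos in auto)
qed

lemma init_block_lower:
  assumes j: "1 \<le> j"
  shows "real_of_int (4 * j) powr (1 - \<beta>) / pi_total \<beta> \<le> measure_pmf.prob (init_pmf \<beta>) {2 * j..4 * j}"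
proof -
  have "real_of_int (4 * j) powr (1 - \<beta>) = real_of_int (4 * j) * bond \<beta> (4 * j)"
    using j by (simp add: bond_def powr_diff powr_minus_divide)
  also have "\<dots> \<le> (\<Sum>x\<in>{2 * j..4 * j}. 2 * bond \<beta> (4 * j))"
    using j bond_pos[of "4 * j" \<beta>] by (simp add: algebra_simps)
  also have "\<dots> \<le> sum (pi_w \<beta>) {2 * j..4 * j}"
  proof (rule sum_mono)
    fix x assume x: "x \<in> {2 * j..4 * j}"
    then have "bond \<beta> (4 * j) \<le> bond \<beta> x" using j \<beta>_gt_1 by (intro bond_antimono) auto
    then show "2 * bond \<beta> (4 * j) \<le> pi_w \<beta> x"
      using x j bond_pos[of "x - 1" \<beta>] by (simp add: pi_w_ge2)
  qed
  finally show ?thesis using pi_total_pos by (simp add: prob_init divide_right_mono)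
qed

end

lemma path_pmf_nonempty: "xs \<in> set_pmf (path_pmf \<beta> t) \<Longrightarrow> xs \<noteq> []"
  by (induction t arbitrary: xs) auto

definition confined :: "int set \<Rightarrow> int set \<Rightarrow> int list \<Rightarrow> bool" where
  "confined K A xs \<longleftrightarrow> hd xs \<in> A \<and> set xs \<subseteq> K"

definition confined_prob :: "real \<Rightarrow> int set \<Rightarrow> int set \<Rightarrow> nat \<Rightarrow> real" where
  "confined_prob \<beta> K A t = measure_pmf.prob (path_pmf \<beta> t) {xs. confined K A xs}"

definition killed_expect :: "real \<Rightarrow> int set \<Rightarrow> int set \<Rightarrow> nat \<Rightarrow> (int \<Rightarrow> real) \<Rightarrow> ennreal" where
  "killed_expect \<beta> K A t h =
     (\<integral>\<^sup>+xs. (if confined K A xs then ennreal (h (last xs)) else 0) \<partial>path_pmf \<beta> t)"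

definition step_expect :: "real \<Rightarrow> int set \<Rightarrow> int \<Rightarrow> (int \<Rightarrow> real) \<Rightarrow> ennreal" where
  "step_expect \<beta> K x h = (\<integral>\<^sup>+y. ennreal (if y \<in> K then h y else 0) \<partial>step_pmf \<beta> x)"

lemma stay_pos_eq_confined_prob: "stay_pos \<beta> t = confined_prob \<beta> {0<..} UNIV t"
  unfolding stay_pos_def confined_prob_def confined_def by (simp add: subset_eq)

lemma confined_prob_0: "confined_prob \<beta> K A 0 = measure_pmf.prob (init_pmf \<beta>) (A \<inter> K)"
proof -
  have "(\<lambda>x. [x]) -` {xs. confined K A xs} = A \<inter> K" by (auto simp: confined_def)
  then show ?thesis by (simp add: confined_prob_def)
qed

lemma confined_prob_mono:
  "K \<subseteq> K' \<Longrightarrow> A \<subseteq> A' \<Longrightarrow> confined_prob \<beta> K A t \<le> confined_prob \<beta> K' A' t"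
  unfolding confined_prob_def confined_def by (intro measure_pmf.finite_measure_mono) auto

lemma confined_prob_Un: "confined_prob \<beta> K (A \<union> B) t \<le> confined_prob \<beta> K A t + confined_prob \<beta> K B t"
proof -
  have "{xs. confined K (A \<union> B) xs} = {xs. confined K A xs} \<union> {xs. confined K B xs}"
    by (auto simp: confined_def)
  then show ?thesis unfolding confined_prob_def by (simp add: measure_Un_le)
qed

lemma confined_last: "xs \<in> set_pmf (path_pmf \<beta> t) \<Longrightarrow> confined K A xs \<Longrightarrow> last xs \<in> K"
  using path_pmf_nonempty[of xs \<beta> t] by (auto simp: confined_def)

lemma killed_expect_0:
  "killed_expect \<beta> K A 0 h = (\<integral>\<^sup>+x. (if x \<in> A \<and> x \<in> K then ennreal (h x) else 0) \<partial>init_pmf \<beta>)"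
  unfolding killed_expect_def confined_def by (simp, intro nn_integral_cong) simp

lemma killed_expect_Suc:
  "killed_expect \<beta> K A (Suc t) h =
     (\<integral>\<^sup>+xs. (if confined K A xs then step_expect \<beta> K (last xs) h else 0) \<partial>path_pmf \<beta> t)"
  unfolding killed_expect_def step_expect_def path_pmf.simps nn_integral_bind_pmf nn_integral_map_pmf
proof (intro nn_integral_cong_AE AE_pmfI)
  fix xs assume "xs \<in> set_pmf (path_pmf \<beta> t)"
  then have "(if confined K A (xs @ [y]) then ennreal (h (last (xs @ [y]))) else 0)
      = (if confined K A xs then ennreal (if y \<in> K then h y else 0) else 0)" for y
    using path_pmf_nonempty by (auto simp: confined_def)
  then show "(\<integral>\<^sup>+y. (if confined K A (xs @ [y]) then ennreal (h (last (xs @ [y]))) else 0) \<partial>step_pmf \<beta> (last xs))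
      = (if confined K A xs then \<integral>\<^sup>+y. ennreal (if y \<in> K then h y else 0) \<partial>step_pmf \<beta> (last xs) else 0)"
    by simp
qed

lemma nn_integral_confined_const:
  "(\<integral>\<^sup>+xs. (if confined K A xs then c else 0) \<partial>path_pmf \<beta> t) = c * ennreal (confined_prob \<beta> K A t)"
proof -
  have "(\<integral>\<^sup>+xs. (if confined K A xs then c else 0) \<partial>path_pmf \<beta> t)
      = (\<integral>\<^sup>+xs. c * indicator {xs. confined K A xs} xs \<partial>path_pmf \<beta> t)"
    by (intro nn_integral_cong) (simp split: split_indicator)
  also have "\<dots> = c * ennreal (confined_prob \<beta> K A t)"
    by (simp add: nn_integral_cmult confined_prob_def measure_pmf.emeasure_eq_measure)
  finally show ?thesis .
qed

lemma killed_expect_const: "killed_expect \<beta> K A t (\<lambda>_. 1) = ennreal (confined_prob \<beta> K A t)"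
proof -
  have "killed_expect \<beta> K A t (\<lambda>_. 1) = (\<integral>\<^sup>+xs. (if confined K A xs then 1 else 0) \<partial>path_pmf \<beta> t)"
    unfolding killed_expect_def by (intro nn_integral_cong) simp
  then show ?thesis by (simp add: nn_integral_confined_const)
qed

lemma nn_integral_if_add:
  "(\<integral>\<^sup>+x. (if P x then f x + g x else 0) \<partial>measure_pmf p)
     = (\<integral>\<^sup>+x. (if P x then f x else 0) \<partial>measure_pmf p) + (\<integral>\<^sup>+x. (if P x then g x else 0) \<partial>measure_pmf p)"
  by (subst nn_integral_add[symmetric]) (auto intro!: nn_integral_cong)

lemma confined_prob_Suc_le: "confined_prob \<beta> K A (Suc t) \<le> confined_prob \<beta> K A t"
proof -
  have "step_expect \<beta> K x (\<lambda>_. 1) \<le> 1" for x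
    unfolding step_expect_def by (rule order.trans[OF nn_integral_mono[of _ _ "\<lambda>_. 1"]]) auto
  then have "killed_expect \<beta> K A (Suc t) (\<lambda>_. 1)
      \<le> (\<integral>\<^sup>+xs. (if confined K A xs then 1 else 0) \<partial>path_pmf \<beta> t)"
    unfolding killed_expect_Suc by (intro nn_integral_mono) auto
  then have "ennreal (confined_prob \<beta> K A (Suc t)) \<le> ennreal (confined_prob \<beta> K A t)"
    by (simp add: killed_expect_const nn_integral_confined_const)
  then show ?thesis by (simp add: confined_prob_def)
qed

lemma confined_prob_antimono: "s \<le> t \<Longrightarrow> confined_prob \<beta> K A t \<le> confined_prob \<beta> K A s"
  by (induction t rule: dec_induct) (auto intro: order.trans[OF confined_prob_Suc_le])

lemma killed_expect_decrease:
  assumes drift: "\<And>x. x \<in> K \<Longrightarrow> step_expect \<beta> K x h + 1 \<le> ennreal (h x)"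
  shows "killed_expect \<beta> K A (Suc t) h + ennreal (confined_prob \<beta> K A t) \<le> killed_expect \<beta> K A t h"
proof -
  have "killed_expect \<beta> K A (Suc t) h + ennreal (confined_prob \<beta> K A t)
      = (\<integral>\<^sup>+xs. (if confined K A xs then step_expect \<beta> K (last xs) h + 1 else 0) \<partial>path_pmf \<beta> t)"
    by (simp add: killed_expect_Suc nn_integral_if_add nn_integral_confined_const)
  also have "\<dots> \<le> killed_expect \<beta> K A t h"
    unfolding killed_expect_def
    by (intro nn_integral_mono_AE AE_pmfI) (auto intro: drift confined_last)
  finally show ?thesis .
qed

(* If h \<ge> 0 decreases by at least 1 in expectation per step of the killed
   walk, then the walk survives t steps with probability at most E[h(Y_0); Y_0 \<in> A \<inter> K] / (t+1):
   summing the one-step bound, the survival probabilities up to t add up to at most E[h(Y_0)]. *)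
lemma lyapunov_upper:
  assumes drift: "\<And>x. x \<in> K \<Longrightarrow> step_expect \<beta> K x h + 1 \<le> ennreal (h x)"
  shows "of_nat (Suc t) * ennreal (confined_prob \<beta> K A t) \<le> killed_expect \<beta> K A 0 h"
proof -
  have cumulative: "killed_expect \<beta> K A n h + (\<Sum>s<n. ennreal (confined_prob \<beta> K A s))
      \<le> killed_expect \<beta> K A 0 h" for n
  proof (induction n)
    case (Suc n)
    have "killed_expect \<beta> K A (Suc n) h + (\<Sum>s<Suc n. ennreal (confined_prob \<beta> K A s))
        = (killed_expect \<beta> K A (Suc n) h + ennreal (confined_prob \<beta> K A n))
          + (\<Sum>s<n. ennreal (confined_prob \<beta> K A s))"
      by (simp add: add_ac)
    also have "\<dots> \<le> killed_expect \<beta> K A n h + (\<Sum>s<n. ennreal (confined_prob \<beta> K A s))"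
      by (intro add_right_mono killed_expect_decrease drift)
    also have "\<dots> \<le> killed_expect \<beta> K A 0 h" by (rule Suc.IH)
    finally show ?case .
  qed simp
  have "of_nat (Suc t) * ennreal (confined_prob \<beta> K A t) = (\<Sum>s<Suc t. ennreal (confined_prob \<beta> K A t))"
    by simp
  also have "\<dots> \<le> (\<Sum>s<Suc t. ennreal (confined_prob \<beta> K A s))"
    by (intro sum_mono ennreal_leI confined_prob_antimono) auto
  also have "\<dots> \<le> killed_expect \<beta> K A 0 h"
    using cumulative[of "Suc t"] by (rule order.trans[rotated]) simp
  finally show ?thesis .
qed

lemma killed_expect_growth:
  assumes h_nonneg: "\<And>y. 0 \<le> h y" and c: "0 \<le> c"
    and drift: "\<And>x. x \<in> K \<Longrightarrow> step_expect \<beta> K x h + ennreal J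
                   \<le> ennreal (h x + c) + ennreal J * step_expect \<beta> K x (\<lambda>_. 1)"
  shows "killed_expect \<beta> K A (Suc t) h + ennreal J * ennreal (confined_prob \<beta> K A t)
    \<le> killed_expect \<beta> K A t h + ennreal c * ennreal (confined_prob \<beta> K A t)
       + ennreal J * ennreal (confined_prob \<beta> K A (Suc t))"
proof -
  let ?E = "\<lambda>P f. \<integral>\<^sup>+xs. (if P xs then f xs else 0) \<partial>path_pmf \<beta> t"
  have "killed_expect \<beta> K A (Suc t) h + ennreal J * ennreal (confined_prob \<beta> K A t)
      = ?E (confined K A) (\<lambda>xs. step_expect \<beta> K (last xs) h + ennreal J)"
    by (simp add: killed_expect_Suc nn_integral_if_add nn_integral_confined_const)
  also have "\<dots> \<le> ?E (confined K A) (\<lambda>xs. ennreal (h (last xs)) + ennreal c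
                    + ennreal J * step_expect \<beta> K (last xs) (\<lambda>_. 1))"
  proof (intro nn_integral_mono_AE AE_pmfI)
    fix xs assume "xs \<in> set_pmf (path_pmf \<beta> t)"
    then show "(if confined K A xs then step_expect \<beta> K (last xs) h + ennreal J else 0)
        \<le> (if confined K A xs then ennreal (h (last xs)) + ennreal c
              + ennreal J * step_expect \<beta> K (last xs) (\<lambda>_. 1) else 0)"
      using drift[OF confined_last] h_nonneg c by (auto simp: ennreal_plus)
  qed
  also have "\<dots> = killed_expect \<beta> K A t h + ennreal c * ennreal (confined_prob \<beta> K A t)
                    + ennreal J * ennreal (confined_prob \<beta> K A (Suc t))"
  proof -
    have "?E (confined K A) (\<lambda>xs. ennreal J * step_expect \<beta> K (last xs) (\<lambda>_. 1))
        = ennreal J * ennreal (confined_prob \<beta> K A (Suc t))"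
      unfolding killed_expect_const[symmetric] killed_expect_Suc
      by (subst nn_integral_cmult[symmetric]) (auto intro!: nn_integral_cong)
    moreover have "?E (confined K A) (\<lambda>xs. ennreal (h (last xs))) = killed_expect \<beta> K A t h"
      by (simp add: killed_expect_def)
    ultimately show ?thesis by (simp add: nn_integral_if_add nn_integral_confined_const)
  qed
  finally show ?thesis .
qed

lemma killed_expect_bounded:
  assumes "\<And>x. x \<in> K \<Longrightarrow> h x \<le> J"
  shows "killed_expect \<beta> K A t h \<le> ennreal J"
proof -
  have "killed_expect \<beta> K A t h \<le> (\<integral>\<^sup>+xs. ennreal J \<partial>path_pmf \<beta> t)"
    unfolding killed_expect_def
    by (intro nn_integral_mono_AE AE_pmfI) (auto intro: ennreal_leI assms confined_last)
  then show ?thesis by simp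
qed

(* Let h \<ge> 0 vanish on the starting set A, be at most J on K, and grow by
   at most c per step of the walk, where leaving K counts as a jump to height J. *)
lemma lyapunov_lower:
  assumes J: "0 < J" and c: "0 \<le> c"
    and h_nonneg: "\<And>y. 0 \<le> h y" and h_bounded: "\<And>x. x \<in> K \<Longrightarrow> h x \<le> J"
    and h_start: "\<And>x. x \<in> A \<Longrightarrow> x \<in> K \<Longrightarrow> h x = 0"
    and drift: "\<And>x. x \<in> K \<Longrightarrow> step_expect \<beta> K x h + ennreal J
                   \<le> ennreal (h x + c) + ennreal J * step_expect \<beta> K x (\<lambda>_. 1)"
  shows "confined_prob \<beta> K A 0 * (1 - c * real t / J) \<le> confined_prob \<beta> K A t"
proof -
  define s where "s n = confined_prob \<beta> K A n" for n
  define w where "w n = enn2real (killed_expect \<beta> K A n h)" for n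
  have s_nonneg: "0 \<le> s n" for n by (simp add: s_def confined_prob_def)
  have w_nonneg: "0 \<le> w n" for n by (simp add: w_def)
  have killed_h: "killed_expect \<beta> K A n h = ennreal (w n)" for n
  proof -
    have "killed_expect \<beta> K A n h \<le> ennreal J" by (rule killed_expect_bounded) (rule h_bounded)
    then have "killed_expect \<beta> K A n h < \<top>" using ennreal_less_top by (rule le_less_trans)
    then show ?thesis by (simp add: w_def less_top)
  qed
  have w_0: "w 0 = 0"
  proof -
    have "killed_expect \<beta> K A 0 h = (\<integral>\<^sup>+x. 0 \<partial>init_pmf \<beta>)"
      unfolding killed_expect_0 by (intro nn_integral_cong) (simp add: h_start)
    then show ?thesis by (simp add: w_def)
  qed
  have step: "w (Suc n) + J * s n \<le> w n + c * s n + J * s (Suc n)" for n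
  proof -
    have "ennreal (w (Suc n) + J * s n) = ennreal (w (Suc n)) + ennreal J * ennreal (s n)"
      using J s_nonneg w_nonneg by (simp add: ennreal_plus ennreal_mult)
    also have "\<dots> \<le> ennreal (w n) + ennreal c * ennreal (s n) + ennreal J * ennreal (s (Suc n))"
      using killed_expect_growth[OF h_nonneg c drift, of A n] by (simp add: killed_h s_def)
    also have "\<dots> = ennreal (w n + c * s n + J * s (Suc n))"
      using J c s_nonneg w_nonneg by (simp add: ennreal_plus ennreal_mult)
    finally show ?thesis using J c s_nonneg w_nonneg by (subst (asm) ennreal_le_iff) auto
  qed
  have cumulative: "w n + J * s 0 \<le> c * (\<Sum>i<n. s i) + J * s n" for n
  proof (induction n)
    case (Suc n) then show ?case using step[of n] by (simp add: algebra_simps)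
  qed (simp add: w_0)
  have "(\<Sum>i<t. s i) \<le> real t * s 0"
    using sum_mono[of "{..<t}" s "\<lambda>_. s 0"] confined_prob_antimono[of 0] by (simp add: s_def)
  then have "c * (\<Sum>i<t. s i) \<le> c * (real t * s 0)" using c by (rule mult_left_mono)
  then have "J * s 0 \<le> c * (real t * s 0) + J * s t" using cumulative[of t] w_nonneg[of t] by linarith
  then show ?thesis using J by (simp add: s_def field_simps)
qed

(* One step of the lazy birth-death chain at X moves left, stays, or moves right with weights
   a1, a1 + a0, a0. *)
lemma mean_quadratic_decrease:
  fixes a1 a0 \<kappa> F X :: real
  assumes "0 < a1" "0 < a0" "a1 \<le> 4 * a0" "16 * a0 \<le> \<kappa> * (a1 * (X - 1) - a0 * X)"
  shows "(a1 * (F - \<kappa> * (X - 1)) + (a1 + a0) * F + a0 * (F + \<kappa> * X)) / (2 * (a1 + a0)) \<le> F - 1"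
proof -
  have "a1 * (F - \<kappa> * (X - 1)) + (a1 + a0) * F + a0 * (F + \<kappa> * X)
      = 2 * (a1 + a0) * F - \<kappa> * (a1 * (X - 1) - a0 * X)"
    by (simp add: algebra_simps)
  also have "\<dots> \<le> 2 * (a1 + a0) * (F - 1)" using assms by (simp add: algebra_simps)
  finally show ?thesis using assms by (simp add: divide_le_eq mult.commute)
qed

lemma mean_square_increase:
  fixes a1 a0 d X :: real
  assumes "0 < a1" "0 < a0" "a0 \<le> a1" "(a1 - a0) * (X - 1) \<le> 3 * a0" "0 \<le> d" "d \<le> X - 1"
  shows "(a1 * (d + 1)\<^sup>2 + (a1 + a0) * d\<^sup>2 + a0 * (d - 1)\<^sup>2) / (2 * (a1 + a0)) \<le> d\<^sup>2 + 5"
proof -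
  have "d * (a1 - a0) \<le> (X - 1) * (a1 - a0)" using assms by (intro mult_right_mono) auto
  then have drift: "2 * d * (a1 - a0) \<le> 6 * a0" using assms by (simp add: algebra_simps)
  have "a1 * (d + 1)\<^sup>2 + (a1 + a0) * d\<^sup>2 + a0 * (d - 1)\<^sup>2
      = 2 * (a1 + a0) * d\<^sup>2 + a1 * (2 * d + 1) + a0 * (1 - 2 * d)"
    by (simp add: algebra_simps power2_eq_square)
  also have "\<dots> \<le> 2 * (a1 + a0) * (d\<^sup>2 + 5)" using drift assms by (simp add: algebra_simps)
  finally show ?thesis using assms by (simp add: divide_le_eq mult.commute)
qed

definition kappa :: "real \<Rightarrow> real" where
  "kappa \<beta> = 16 / (\<beta> - 1)"

definition quad_lyap :: "real \<Rightarrow> int \<Rightarrow> real" where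
  "quad_lyap \<beta> y = 2 * kappa \<beta> + 4 + kappa \<beta> * real_of_int y * (real_of_int y - 1) / 2"

definition gap_sq :: "int \<Rightarrow> int \<Rightarrow> real" where
  "gap_sq j y = (real_of_int (max 0 (2 * j - y)))\<^sup>2"

lemma kappa_pos: "1 < \<beta> \<Longrightarrow> 0 < kappa \<beta>"
  by (simp add: kappa_def)

lemma quad_lyap_lower:
  assumes "1 < \<beta>"
  shows "2 * kappa \<beta> + 4 \<le> quad_lyap \<beta> y"
proof -
  have "0 \<le> real_of_int y * (real_of_int y - 1)"
    by (cases "1 \<le> y") (auto simp: mult_nonpos_nonpos zero_le_mult_iff)
  then show ?thesis using kappa_pos[OF assms] by (simp add: quad_lyap_def mult.assoc)
qed

lemma quad_lyap_nonneg: "1 < \<beta> \<Longrightarrow> 0 \<le> quad_lyap \<beta> y"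
  using quad_lyap_lower[of \<beta> y] kappa_pos[of \<beta>] by linarith

lemma quad_lyap_upper:
  assumes \<beta>: "1 < \<beta>" and "1 \<le> x"
  shows "quad_lyap \<beta> x \<le> (3 * kappa \<beta> + 4) * (real_of_int x)\<^sup>2"
proof -
  have x: "1 \<le> real_of_int x" using assms(2) by simp
  then have "1 \<le> (real_of_int x)\<^sup>2" by (simp add: one_le_power)
  then have "2 * kappa \<beta> + 4 \<le> (2 * kappa \<beta> + 4) * (real_of_int x)\<^sup>2"
    using kappa_pos[OF \<beta>] by (simp add: mult_le_cancel_left1)
  moreover have "kappa \<beta> * (real_of_int x * (real_of_int x - 1) / 2) \<le> kappa \<beta> * (real_of_int x)\<^sup>2"
    using x kappa_pos[OF \<beta>] by (intro mult_left_mono) (auto simp: power2_eq_square field_simps)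
  moreover have "quad_lyap \<beta> x = (2 * kappa \<beta> + 4) + kappa \<beta> * (real_of_int x * (real_of_int x - 1) / 2)"
    by (simp add: quad_lyap_def)
  moreover have "(3 * kappa \<beta> + 4) * (real_of_int x)\<^sup>2
      = (2 * kappa \<beta> + 4) * (real_of_int x)\<^sup>2 + kappa \<beta> * (real_of_int x)\<^sup>2"
    by (simp add: algebra_simps)
  ultimately show ?thesis by linarith
qed

context
  fixes \<beta> :: real
  assumes \<beta>_gt_1: "1 < \<beta>" and \<beta>_lt_2: "\<beta> < 2"
begin

(* quad_lyap decreases by at least 1 in expectation per step of the walk killed on leaving the
   positive half-line; at y = 1 the killed jump to -1 contributes nothing. *)
lemma quad_lyap_drift:
  assumes x: "1 \<le> x"
  shows "step_expect \<beta> {0<..} x (quad_lyap \<beta>) + 1 \<le> ennreal (quad_lyap \<beta> x)"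
proof -
  let ?f = "quad_lyap \<beta>" and ?\<kappa> = "kappa \<beta>"
  let ?g = "\<lambda>y. if y \<in> {0<..} then ?f y else 0"
  have g_nonneg: "0 \<le> ?g y" for y by (simp add: quad_lyap_nonneg \<beta>_gt_1)
  have "\<exists>E. step_expect \<beta> {0<..} x ?f = ennreal E \<and> 0 \<le> E \<and> E \<le> ?f x - 1"
  proof (cases "x = 1")
    case True
    have "step_expect \<beta> {0<..} x ?f = ennreal ((?f 1 / 2 + ?f 2) / 2)"
      unfolding step_expect_def True by (subst step_pmf_integral_1[OF g_nonneg]) simp
    moreover have "?f 1 = 2 * ?\<kappa> + 4" "?f 2 = 3 * ?\<kappa> + 4" by (simp_all add: quad_lyap_def)
    ultimately show ?thesis using True kappa_pos[OF \<beta>_gt_1] by (intro exI[of _ "(?f 1 / 2 + ?f 2) / 2"]) simp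
  next
    case False
    with x have x2: "2 \<le> x" by simp
    define a1 where "a1 = bond \<beta> (x - 1)"
    define a0 where "a0 = bond \<beta> x"
    define X where "X = real_of_int x"
    have pos: "0 < a1" "0 < a0" using x2 bond_pos unfolding a1_def a0_def by auto
    have "(\<beta> - 1) * a0 \<le> a1 * (X - 1) - a0 * X"
      using powr_decrement_lower[of X \<beta>] x2 \<beta>_gt_1
      by (simp add: a1_def a0_def X_def bond_def powr_diff powr_minus_divide)
    then have "16 * a0 \<le> ?\<kappa> * (a1 * (X - 1) - a0 * X)"
      using \<beta>_gt_1 by (simp add: kappa_def field_simps)
    then have mean: "(a1 * (?f x - ?\<kappa> * (X - 1)) + (a1 + a0) * ?f x + a0 * (?f x + ?\<kappa> * X))
        / (2 * (a1 + a0)) \<le> ?f x - 1"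
      using pos bond_prev_le4[of \<beta> x] x2 \<beta>_lt_2
      by (intro mean_quadratic_decrease) (auto simp: a1_def a0_def)
    have neighbours: "?f (x - 1) = ?f x - ?\<kappa> * (X - 1)" "?f (x + 1) = ?f x + ?\<kappa> * X"
      unfolding quad_lyap_def X_def by (simp_all add: field_simps)
    have "step_expect \<beta> {0<..} x ?f = ennreal
        ((a1 * ?f (x - 1) + (a1 + a0) * ?f x + a0 * ?f (x + 1)) / (2 * (a1 + a0)))"
      unfolding step_expect_def a1_def a0_def using x2
      by (subst step_pmf_integral_ge2[OF x2 g_nonneg]) simp
    then show ?thesis using mean pos
      by (intro exI[of _ "(a1 * ?f (x - 1) + (a1 + a0) * ?f x + a0 * ?f (x + 1)) / (2 * (a1 + a0))"])
        (auto simp: neighbours[symmetric] quad_lyap_nonneg \<beta>_gt_1)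
  qed
  then obtain E where E: "step_expect \<beta> {0<..} x ?f = ennreal E" "0 \<le> E" "E \<le> ?f x - 1" by blast
  then have "step_expect \<beta> {0<..} x ?f + 1 = ennreal (E + 1)" by simp
  then show ?thesis using E by (simp only:) (intro ennreal_leI, linarith)
qed

(* The square gap 2j - y grows by at most 5 in expectation per step above j: the drift of the
   walk towards the origin is only O(1/y). *)
lemma gap_sq_mean_step:
  assumes j: "1 \<le> j" and x: "j < x"
  shows "(\<integral>\<^sup>+y. ennreal (gap_sq j y) \<partial>step_pmf \<beta> x) \<le> ennreal (gap_sq j x + 5)"
proof -
  have x2: "2 \<le> x" using j x by simp
  define a1 where "a1 = bond \<beta> (x - 1)"
  define a0 where "a0 = bond \<beta> x"
  have pos: "0 < a1" "0 < a0" using x2 bond_pos unfolding a1_def a0_def by auto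
  have mean: "(a1 * gap_sq j (x - 1) + (a1 + a0) * gap_sq j x + a0 * gap_sq j (x + 1)) / (2 * (a1 + a0))
      \<le> gap_sq j x + 5"
  proof (cases "2 * j \<le> x")
    case True
    have "max 0 (2 * j - (x - 1)) \<in> {0, 1}" using True by auto
    then have "gap_sq j (x - 1) \<le> 1" by (auto simp: gap_sq_def)
    then have "a1 * gap_sq j (x - 1) \<le> a1" using pos by (intro mult_left_le) auto
    then have "a1 * gap_sq j (x - 1) \<le> 10 * a1 + 10 * a0" using pos by linarith
    moreover have "gap_sq j x = 0" "gap_sq j (x + 1) = 0" using True by (auto simp: gap_sq_def)
    ultimately show ?thesis using pos by (simp add: divide_le_eq)
  next
    case False
    define d where "d = real_of_int (2 * j - x)"
    have gaps: "gap_sq j (x - 1) = (d + 1)\<^sup>2" "gap_sq j x = d\<^sup>2" "gap_sq j (x + 1) = (d - 1)\<^sup>2"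
      using False unfolding gap_sq_def d_def by (simp_all add: algebra_simps)
    have "a0 \<le> a1" using x2 \<beta>_gt_1 unfolding a1_def a0_def by (intro bond_antimono) auto
    moreover have "(a1 - a0) * (real_of_int x - 1) \<le> 3 * a0"
      using bond_prev_le[of \<beta> x] x2 \<beta>_lt_2 by (simp add: a1_def a0_def field_simps)
    ultimately show ?thesis unfolding gaps using pos False x
      by (intro mean_square_increase) (auto simp: d_def)
  qed
  have "0 \<le> gap_sq j y" for y by (simp add: gap_sq_def)
  then show ?thesis
    using mean unfolding a1_def a0_def
    by (subst step_pmf_integral_ge2[OF x2]) (auto intro!: ennreal_leI simp del: ennreal_plus)
qed

(* Killing at j costs exactly j\<^sup>2 = gap_sq j j, so gap_sq satisfies the hypothesis of the
   Lyapunov lower bound on K = (j, \<infinity>) with c = 5. *)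
lemma gap_sq_drift:
  assumes j: "1 \<le> j" and x: "j < x"
  shows "step_expect \<beta> {j<..} x (gap_sq j) + ennreal ((real_of_int j)\<^sup>2)
    \<le> ennreal (gap_sq j x + 5) + ennreal ((real_of_int j)\<^sup>2) * step_expect \<beta> {j<..} x (\<lambda>_. 1)"
proof -
  let ?J = "ennreal ((real_of_int j)\<^sup>2)"
  have "step_expect \<beta> {j<..} x (gap_sq j) + ?J
      = (\<integral>\<^sup>+y. ennreal (if y \<in> {j<..} then gap_sq j y else 0) + ?J \<partial>step_pmf \<beta> x)"
    unfolding step_expect_def by (subst nn_integral_add) auto
  also have "\<dots> = (\<integral>\<^sup>+y. ennreal (gap_sq j y) + ?J * ennreal (if y \<in> {j<..} then 1 else 0) \<partial>step_pmf \<beta> x)"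
  proof (intro nn_integral_cong_AE AE_pmfI)
    fix y assume y: "y \<in> set_pmf (step_pmf \<beta> x)"
    have "j \<le> y" using set_step_pmf_ge2[OF _ y] j x by simp
    then show "ennreal (if y \<in> {j<..} then gap_sq j y else 0) + ?J
        = ennreal (gap_sq j y) + ?J * ennreal (if y \<in> {j<..} then 1 else 0)"
      using j by (cases "y = j") (auto simp: gap_sq_def)
  qed
  also have "\<dots> = (\<integral>\<^sup>+y. ennreal (gap_sq j y) \<partial>step_pmf \<beta> x) + ?J * step_expect \<beta> {j<..} x (\<lambda>_. 1)"
    unfolding step_expect_def by (simp add: nn_integral_add nn_integral_cmult)
  also have "\<dots> \<le> ennreal (gap_sq j x + 5) + ?J * step_expect \<beta> {j<..} x (\<lambda>_. 1)"
    by (intro add_right_mono gap_sq_mean_step j x)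
  finally show ?thesis .
qed

end

lemma powr_sandwich_eventually:
  fixes f :: "nat \<Rightarrow> real"
  assumes c: "0 < c" and C: "0 < C"
    and bounds: "eventually (\<lambda>t. c * real t powr a \<le> f t \<and> f t \<le> C * real t powr a) sequentially"
    and \<epsilon>: "0 < \<epsilon>"
  shows "eventually (\<lambda>t. real t powr (a - \<epsilon>) \<le> f t \<and> f t \<le> real t powr (a + \<epsilon>)) sequentially"
proof -
  have "filterlim (\<lambda>t. real t powr \<epsilon>) at_top sequentially"
    using real_powr_at_top[OF \<epsilon>] filterlim_real_sequentially by (rule filterlim_compose)
  then have "eventually (\<lambda>t. C \<le> real t powr \<epsilon>) sequentially"
    and "eventually (\<lambda>t. 1 / c \<le> real t powr \<epsilon>) sequentially"
    by (simp_all add: filterlim_at_top)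
  then show ?thesis
    using bounds eventually_ge_at_top[of 1]
  proof eventually_elim
    case (elim t)
    then have t_pos: "0 < real t powr a" "0 < real t powr \<epsilon>" by auto
    have "real t powr (a - \<epsilon>) = real t powr a * (1 / real t powr \<epsilon>)" by (simp add: powr_diff)
    also have "\<dots> \<le> real t powr a * c"
      using elim c t_pos by (intro mult_left_mono) (auto simp: field_simps)
    finally have lower: "real t powr (a - \<epsilon>) \<le> f t" using elim by (simp add: mult.commute)
    have "f t \<le> C * real t powr a" using elim by simp
    also have "\<dots> \<le> real t powr \<epsilon> * real t powr a" using elim t_pos by (intro mult_right_mono) auto
    finally show ?case using lower by (simp add: powr_add mult.commute)
  qed
qed

(* Choice of the cut-off m = \<lceil>\<surd>t\<rceil> for the upper bound: the tail mass beyond m and the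
   Lyapunov term m powr (3-beta) / t are both of order t powr ((1-beta)/2). *)
lemma ceiling_sqrt_powr_bounds:
  fixes t :: nat and \<beta> :: real
  assumes t: "4 \<le> t" and \<beta>: "1 < \<beta>" "\<beta> < 2"
  defines "m \<equiv> \<lceil>sqrt (real t)\<rceil>" and "a \<equiv> (1 - \<beta>) / 2"
  shows "2 \<le> m" "real_of_int (m - 1) powr (1 - \<beta>) \<le> 2 * real t powr a"
    "real_of_int m powr (3 - \<beta>) \<le> 8 * real t * real t powr a"
proof -
  define r where "r = sqrt (real t)"
  have r2: "2 \<le> r" using t real_sqrt_le_mono[of 4 "real t"] by (simp add: r_def)
  have mr: "r \<le> real_of_int m" "real_of_int m \<le> r + 1"
    using ceiling_correct[of r] by (auto simp: m_def r_def)
  show "2 \<le> m" using mr r2 by linarith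
  have r_powr: "r powr x = real t powr (x / 2)" for x
    by (simp add: r_def powr_half_sqrt[symmetric] powr_powr)
  have t_pos: "0 < real t powr a" using t by simp
  have "real_of_int (m - 1) powr (1 - \<beta>) \<le> (r / 2) powr (1 - \<beta>)"
    using mr r2 \<beta> by (intro powr_mono2') auto
  also have "\<dots> = real t powr a / 2 powr (1 - \<beta>)"
    using r2 by (simp add: powr_divide r_powr a_def)
  also have "\<dots> = 2 powr (\<beta> - 1) * real t powr a"
    using powr_minus_divide[of 2 "1 - \<beta>"] by simp
  also have "\<dots> \<le> 2 * real t powr a"
    using \<beta> t_pos powr_mono[of "\<beta> - 1" 1 2] by (intro mult_right_mono) auto
  finally show "real_of_int (m - 1) powr (1 - \<beta>) \<le> 2 * real t powr a" .
  have "real_of_int m powr (3 - \<beta>) \<le> (2 * r) powr (3 - \<beta>)"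
    using mr r2 \<beta> by (intro powr_mono2) auto
  also have "\<dots> = 2 powr (3 - \<beta>) * (real t * real t powr a)"
  proof -
    have exponent: "(3 - \<beta>) / 2 = 1 + a" by (simp add: a_def field_simps)
    have "r powr (3 - \<beta>) = real t powr (1 + a)" by (simp only: r_powr exponent)
    also have "\<dots> = real t * real t powr a" using t by (simp add: powr_add)
    finally show ?thesis using r2 by (simp add: powr_mult)
  qed
  also have "\<dots> \<le> 8 * (real t * real t powr a)"
    using \<beta> t_pos powr_mono[of "3 - \<beta>" 3 2] by (intro mult_right_mono) auto
  finally show "real_of_int m powr (3 - \<beta>) \<le> 8 * real t * real t powr a" by simp
qed

lemma ceiling_sqrt10_bounds:
  fixes t :: nat and \<beta> :: real
  assumes t: "1 \<le> t" and \<beta>: "1 < \<beta>" "\<beta> < 2"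
  defines "j \<equiv> \<lceil>sqrt (10 * real t)\<rceil>" and "a \<equiv> (1 - \<beta>) / 2"
  shows "1 \<le> j" "10 * real t \<le> (real_of_int j)\<^sup>2"
    "real t powr a / 20 \<le> real_of_int (4 * j) powr (1 - \<beta>)"
proof -
  define q where "q = sqrt (10 * real t)"
  have sqrt_t: "1 \<le> sqrt (real t)" using t by simp
  have jq: "q \<le> real_of_int j" "real_of_int j \<le> q + 1"
    using ceiling_correct[of q] by (auto simp: j_def q_def)
  have q1: "1 \<le> q" using t by (simp add: q_def)
  then show "1 \<le> j" using jq by linarith
  show "10 * real t \<le> (real_of_int j)\<^sup>2"
    using power_mono[OF jq(1), of 2] q1 t by (simp add: q_def)
  have "q = sqrt 10 * sqrt (real t)" by (simp add: q_def real_sqrt_mult)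
  also have "\<dots> \<le> 4 * sqrt (real t)"
    using real_sqrt_le_mono[of 10 16] sqrt_t by (intro mult_right_mono) auto
  finally have "real_of_int j \<le> 5 * sqrt (real t)" using jq sqrt_t by linarith
  then have block_end: "real_of_int (4 * j) \<le> 20 * sqrt (real t)" by simp
  have "real t powr a / 20 = 20 powr (-1) * real t powr a" by (simp add: powr_minus_divide)
  also have "\<dots> \<le> 20 powr (1 - \<beta>) * real t powr a"
    using \<beta> t by (intro mult_right_mono powr_mono) auto
  also have "\<dots> = (20 * sqrt (real t)) powr (1 - \<beta>)"
    using t by (simp add: powr_mult a_def powr_half_sqrt[symmetric] powr_powr)
  also have "\<dots> \<le> real_of_int (4 * j) powr (1 - \<beta>)"
    using block_end \<open>1 \<le> j\<close> \<beta> by (intro powr_mono2') auto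
  finally show "real t powr a / 20 \<le> real_of_int (4 * j) powr (1 - \<beta>)" .
qed

context
  fixes \<beta> :: real
  assumes \<beta>_gt_1: "1 < \<beta>" and \<beta>_lt_2: "\<beta> < 2"
begin

lemma quad_lyap_pi_w_le:
  assumes x: "1 \<le> x" "x \<le> m"
  shows "quad_lyap \<beta> x * pi_w \<beta> x \<le> 10 * (3 * kappa \<beta> + 4) * real_of_int m powr (2 - \<beta>)"
proof -
  let ?C = "10 * (3 * kappa \<beta> + 4)"
  have "quad_lyap \<beta> x * pi_w \<beta> x \<le> ((3 * kappa \<beta> + 4) * (real_of_int x)\<^sup>2) * (10 * bond \<beta> x)"
    using quad_lyap_upper[OF \<beta>_gt_1] pi_w_le_bond[OF \<beta>_gt_1 \<beta>_lt_2] x kappa_pos[OF \<beta>_gt_1]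
    by (intro mult_mono) (auto simp: quad_lyap_nonneg[OF \<beta>_gt_1] pi_w_nonneg)
  also have "\<dots> = ?C * real_of_int x powr (2 - \<beta>)"
    using x by (simp add: bond_def powr_diff powr_minus_divide powr_numeral)
  also have "\<dots> \<le> ?C * real_of_int m powr (2 - \<beta>)"
    using x kappa_pos[OF \<beta>_gt_1] \<beta>_lt_2 by (intro mult_left_mono powr_mono2) auto
  finally show ?thesis .
qed

lemma killed_quad_lyap_init:
  assumes m: "2 \<le> m"
  shows "killed_expect \<beta> {0<..} {..<m} 0 (quad_lyap \<beta>)
    \<le> ennreal (10 * (3 * kappa \<beta> + 4) * real_of_int m powr (3 - \<beta>) / pi_total \<beta>)"
proof -
  let ?C = "10 * (3 * kappa \<beta> + 4)" and ?Z = "pi_total \<beta>"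
  have C: "0 \<le> ?C" using kappa_pos[OF \<beta>_gt_1] by simp
  have term_bound: "quad_lyap \<beta> x * pi_w \<beta> x / ?Z \<le> ?C * real_of_int m powr (2 - \<beta>) / ?Z"
    if "x \<in> {1..m - 1}" for x
    using that quad_lyap_pi_w_le[of x m] pi_total_pos[OF \<beta>_gt_1 \<beta>_lt_2] by (simp add: divide_right_mono)
  have "killed_expect \<beta> {0<..} {..<m} 0 (quad_lyap \<beta>)
      = (\<Sum>x\<in>{1..m - 1}. (if x \<in> {..<m} \<and> x \<in> {0<..} then ennreal (quad_lyap \<beta> x) else 0)
           * pmf (init_pmf \<beta>) x)"
    unfolding killed_expect_0 by (rule nn_integral_measure_pmf_support) auto
  also have "\<dots> = ennreal (\<Sum>x\<in>{1..m - 1}. quad_lyap \<beta> x * pi_w \<beta> x / ?Z)"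
    using pi_total_pos[OF \<beta>_gt_1 \<beta>_lt_2]
    by (simp add: pmf_init[OF \<beta>_gt_1 \<beta>_lt_2] ennreal_mult[symmetric] sum_ennreal
        quad_lyap_nonneg[OF \<beta>_gt_1] pi_w_nonneg)
  also have "\<dots> \<le> ennreal (\<Sum>x\<in>{1..m - 1}. ?C * real_of_int m powr (2 - \<beta>) / ?Z)"
    by (intro ennreal_leI sum_mono term_bound)
  also have "\<dots> \<le> ennreal (?C * real_of_int m powr (3 - \<beta>) / ?Z)"
  proof (intro ennreal_leI)
    let ?B = "?C * real_of_int m powr (2 - \<beta>) / ?Z"
    have "0 \<le> ?B" using C pi_total_pos[OF \<beta>_gt_1 \<beta>_lt_2] by simp
    have "(\<Sum>x\<in>{1..m - 1}. ?B) = real_of_int (m - 1) * ?B" using m by simp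
    also have "\<dots> \<le> real_of_int m * ?B" using \<open>0 \<le> ?B\<close> by (intro mult_right_mono) simp_all
    also have "real_of_int m * ?B = ?C * (real_of_int m * real_of_int m powr (2 - \<beta>)) / ?Z" by simp
    also have "real_of_int m * real_of_int m powr (2 - \<beta>) = real_of_int m powr (3 - \<beta>)"
      using m by (subst powr_mult_base) auto
    finally show "(\<Sum>x\<in>{1..m - 1}. ?B) \<le> ?C * real_of_int m powr (3 - \<beta>) / ?Z" .
  qed
  finally show ?thesis .
qed

(* Upper bound: either the walk starts beyond m, or it starts in (0, m) and must survive the
   quadratic Lyapunov function. *)
lemma stay_pos_upper:
  assumes m: "2 \<le> m"
  shows "stay_pos \<beta> t \<le> measure_pmf.prob (init_pmf \<beta>) {m..}
    + 10 * (3 * kappa \<beta> + 4) * real_of_int m powr (3 - \<beta>) / pi_total \<beta> / real (Suc t)"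
proof -
  let ?K = "{0<..} :: int set"
  let ?B = "10 * (3 * kappa \<beta> + 4) * real_of_int m powr (3 - \<beta>) / pi_total \<beta>"
  have "of_nat (Suc t) * ennreal (confined_prob \<beta> ?K {..<m} t) \<le> ennreal ?B"
    using lyapunov_upper[OF quad_lyap_drift[OF \<beta>_gt_1 \<beta>_lt_2]] killed_quad_lyap_init[OF m]
    by (rule order.trans) simp
  then have "ennreal (real (Suc t) * confined_prob \<beta> ?K {..<m} t) \<le> ennreal ?B"
    by (simp add: ennreal_of_nat_eq_real_of_nat ennreal_mult confined_prob_def)
  moreover have "0 \<le> ?B" using kappa_pos[OF \<beta>_gt_1] pi_total_pos[OF \<beta>_gt_1 \<beta>_lt_2] by simp
  ultimately have "real (Suc t) * confined_prob \<beta> ?K {..<m} t \<le> ?B" by simp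
  then have start_below: "confined_prob \<beta> ?K {..<m} t \<le> ?B / real (Suc t)"
    by (simp only: pos_le_divide_eq[of "real (Suc t)"] of_nat_0_less_iff zero_less_Suc mult.commute)
  have "confined_prob \<beta> ?K {m..} t \<le> confined_prob \<beta> ?K {m..} 0"
    by (rule confined_prob_antimono) simp
  also have "\<dots> \<le> measure_pmf.prob (init_pmf \<beta>) {m..}"
    unfolding confined_prob_0 by (rule measure_pmf.finite_measure_mono) auto
  finally have start_above: "confined_prob \<beta> ?K {m..} t \<le> measure_pmf.prob (init_pmf \<beta>) {m..}" .
  have "{..<m} \<union> {m..} = UNIV" by auto
  then have "stay_pos \<beta> t = confined_prob \<beta> ?K ({..<m} \<union> {m..}) t"
    by (simp add: stay_pos_eq_confined_prob)
  also have "\<dots> \<le> confined_prob \<beta> ?K {..<m} t + confined_prob \<beta> ?K {m..} t"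
    by (rule confined_prob_Un)
  finally show ?thesis using start_below start_above by simp
qed

lemma stay_pos_lower:
  assumes j: "1 \<le> j"
  shows "measure_pmf.prob (init_pmf \<beta>) {2 * j..4 * j} * (1 - 5 * real t / (real_of_int j)\<^sup>2)
    \<le> stay_pos \<beta> t"
proof -
  let ?K = "{j<..}" and ?A = "{2 * j..4 * j}"
  have "confined_prob \<beta> ?K ?A 0 * (1 - 5 * real t / (real_of_int j)\<^sup>2) \<le> confined_prob \<beta> ?K ?A t"
  proof (rule lyapunov_lower)
    show "0 \<le> gap_sq j y" for y by (simp add: gap_sq_def)
    show "gap_sq j x \<le> (real_of_int j)\<^sup>2" if "x \<in> ?K" for x
      using that j by (auto simp: gap_sq_def intro!: power_mono)
    show "gap_sq j x = 0" if "x \<in> ?A" for x using that by (simp add: gap_sq_def)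
  qed (use j gap_sq_drift[OF \<beta>_gt_1 \<beta>_lt_2 j] in auto)
  moreover have "confined_prob \<beta> ?K ?A 0 = measure_pmf.prob (init_pmf \<beta>) ?A"
    using j by (simp add: confined_prob_0 Int_absorb2 subset_eq)
  moreover have "confined_prob \<beta> ?K ?A t \<le> stay_pos \<beta> t"
    unfolding stay_pos_eq_confined_prob using j by (intro confined_prob_mono) auto
  ultimately show ?thesis by simp
qed

lemma stay_pos_upper_asymp:
  assumes t: "4 \<le> t"
  shows "stay_pos \<beta> t \<le> (20 / (\<beta> - 1) + 80 * (3 * kappa \<beta> + 4)) / pi_total \<beta> * real t powr ((1 - \<beta>) / 2)"
proof -
  define m where "m = \<lceil>sqrt (real t)\<rceil>"
  define a where "a = (1 - \<beta>) / 2"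
  let ?Z = "pi_total \<beta>" and ?C = "10 * (3 * kappa \<beta> + 4)"
  note scale = ceiling_sqrt_powr_bounds[OF t \<beta>_gt_1 \<beta>_lt_2, folded m_def a_def]
  have Z: "0 < ?Z" and C: "0 \<le> ?C" using pi_total_pos[OF \<beta>_gt_1 \<beta>_lt_2] kappa_pos[OF \<beta>_gt_1] by auto
  have "measure_pmf.prob (init_pmf \<beta>) {m..} \<le> 10 / (\<beta> - 1) * real_of_int (m - 1) powr (1 - \<beta>) / ?Z"
    by (rule init_tail_upper[OF \<beta>_gt_1 \<beta>_lt_2 scale(1)])
  also have "\<dots> \<le> 10 / (\<beta> - 1) * (2 * real t powr a) / ?Z"
    using scale(2) Z \<beta>_gt_1 by (intro divide_right_mono mult_left_mono) auto
  finally have tail: "measure_pmf.prob (init_pmf \<beta>) {m..} \<le> 20 / (\<beta> - 1) / ?Z * real t powr a"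
    by simp
  have "?C * real_of_int m powr (3 - \<beta>) / ?Z / real (Suc t) \<le> ?C * (8 * real t * real t powr a) / ?Z / real t"
    using scale(3) C Z t by (intro divide_mono mult_left_mono divide_right_mono) auto
  also have "\<dots> = 8 * ?C / ?Z * real t powr a" using t by simp
  finally have survive: "?C * real_of_int m powr (3 - \<beta>) / ?Z / real (Suc t) \<le> 8 * ?C / ?Z * real t powr a" .
  show ?thesis
    using stay_pos_upper[OF scale(1), of t] tail survive by (simp add: a_def add_divide_distrib distrib_right)
qed

lemma stay_pos_lower_asymp:
  assumes t: "1 \<le> t"
  shows "1 / (40 * pi_total \<beta>) * real t powr ((1 - \<beta>) / 2) \<le> stay_pos \<beta> t"
proof -
  define j where "j = \<lceil>sqrt (10 * real t)\<rceil>"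
  define a where "a = (1 - \<beta>) / 2"
  let ?Z = "pi_total \<beta>"
  note scale = ceiling_sqrt10_bounds[OF t \<beta>_gt_1 \<beta>_lt_2, folded j_def a_def]
  have survival: "1 / 2 \<le> 1 - 5 * real t / (real_of_int j)\<^sup>2"
    using scale(1,2) t by (simp add: field_simps)
  have "real t powr a / 20 / ?Z \<le> real_of_int (4 * j) powr (1 - \<beta>) / ?Z"
    using scale(3) pi_total_pos[OF \<beta>_gt_1 \<beta>_lt_2] by (intro divide_right_mono) auto
  also have "\<dots> \<le> measure_pmf.prob (init_pmf \<beta>) {2 * j..4 * j}"
    by (rule init_block_lower[OF \<beta>_gt_1 \<beta>_lt_2 scale(1)])
  finally have block: "real t powr a / 20 / ?Z \<le> measure_pmf.prob (init_pmf \<beta>) {2 * j..4 * j}" .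
  have "1 / (40 * ?Z) * real t powr a = real t powr a / 20 / ?Z * (1 / 2)" by simp
  also have "\<dots> \<le> measure_pmf.prob (init_pmf \<beta>) {2 * j..4 * j} * (1 - 5 * real t / (real_of_int j)\<^sup>2)"
    using block survival by (intro mult_mono) auto
  also have "\<dots> \<le> stay_pos \<beta> t" by (rule stay_pos_lower[OF scale(1)])
  finally show ?thesis by (simp add: a_def)
qed

end

theorem mainTheorem6:
  fixes \<beta> :: real
  assumes "1 < \<beta>" and "\<beta> < 2"
  shows "measure_pmf.prob (init_pmf \<beta>) {x. 0 < x} = 1/2
    \<and> (\<forall>\<epsilon>>0. eventually (\<lambda>t. real t powr ((1 - \<beta>)/2 - \<epsilon>) \<le> stay_pos \<beta> t
                           \<and> stay_pos \<beta> t \<le> real t powr ((1 - \<beta>)/2 + \<epsilon>)) sequentially)"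
proof (intro conjI allI impI)
  show "measure_pmf.prob (init_pmf \<beta>) {x. 0 < x} = 1/2"
    by (rule init_positive_half[OF assms])
  let ?c = "1 / (40 * pi_total \<beta>)"
  let ?C = "(20 / (\<beta> - 1) + 80 * (3 * kappa \<beta> + 4)) / pi_total \<beta>"
  have positive: "0 < ?c" "0 < ?C"
    using pi_total_pos[OF assms] kappa_pos[OF assms(1)] assms(1)
    by (auto intro!: divide_pos_pos add_pos_pos)
  have "eventually (\<lambda>t. ?c * real t powr ((1 - \<beta>) / 2) \<le> stay_pos \<beta> t
                      \<and> stay_pos \<beta> t \<le> ?C * real t powr ((1 - \<beta>) / 2)) sequentially"
    using eventually_ge_at_top[of 4]
  proof eventually_elim
    case (elim t)
    then show ?case using stay_pos_lower_asymp[OF assms, of t] stay_pos_upper_asymp[OF assms, of t] by simp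
  qed
  then show "eventually (\<lambda>t. real t powr ((1 - \<beta>)/2 - \<epsilon>) \<le> stay_pos \<beta> t
                           \<and> stay_pos \<beta> t \<le> real t powr ((1 - \<beta>)/2 + \<epsilon>)) sequentially"
    if "0 < \<epsilon>" for \<epsilon>
    using powr_sandwich_eventually[OF positive] that by blast
qed

end
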